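(* Let $\Lambda$ be a lattice with basis $B_\Lambda$; for $i=1,2$ let $Z_i$ be a lattice with orthonormal basis $B_i$ and $\iota_i:\Lambda\hookrightarrow Z_i$ a lattice embedding. Suppose that $\langle\iota_1(x),e\rangle\in\{0,1\}$ for all $x\in B_\Lambda$, $e\in B_1$; that for every $e\in B_1$ there exists $x\in B_\Lambda$ with $\langle\iota_1(x),e\rangle\neq0$; and that for $i=1,2$ the restriction map $Z_i^*\to\Lambda^*$ (via $\iota_i$) induces a surjection $r_i:\mathrm{Short}(Z_i)\to\mathrm{Short}(\Lambda)$. Then there exists a lattice embedding $\iota:Z_1\hookrightarrow Z_2$ such that $\iota_2=\iota\circ\iota_1$.
   Context: A lattice is a finitely generated free abelian group with a non-degenerate symmetric $\mathbb{Q}$-valued bilinear form; a lattice embedding is an injective homomorphism preserving the form. For an integral positive definite lattice $\Lambda$ (here $\Lambda$ embeds in $Z_1$, so it is such), $\Lambda^*=\{x\in\Lambda\otimes\mathbb{Q}:\langle x,y\rangle\in\mathbb{Z}\ \forall y\}$, $\mathrm{Char}(\Lambda)=\{\chi\in\Lambda^*:\langle\chi,y\rangle\equiv\langle y,y\rangle\pmod 2\ \forall y\in\Lambda\}$, and $\mathrm{Short}(\Lambda)$ is the set of $\chi\in\mathrm{Char}(\Lambda)$ with $\langle\chi,\chi\rangle\le\langle\chi',\chi'\rangle$ for all $\chi'\in\chi+2\Lambda$. For $Z_i$ with orthonormal basis $B_i$, $\mathrm{Short}(Z_i)$ consists of the vectors $\chi$ with $\langle\chi,e\rangle=\pm1$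 for all $e\in B_i$. *)

theory Defs
  imports Complex_Main
begin

text \<open>A lattice of rank CARD('n) with a chosen basis is modelled as the group of integer
coordinate vectors 'n \<Rightarrow> int, with the bilinear form given by a rational Gram matrix
G :: 'n \<Rightarrow> 'n \<Rightarrow> rat (w.r.t. the basis). The rational span (lattice tensor Q) is
'n \<Rightarrow> rat. A lattice with orthonormal basis has the identity Gram matrix.\<close>

definition bilQ :: "('n::finite \<Rightarrow> 'n \<Rightarrow> rat) \<Rightarrow> ('n \<Rightarrow> rat) \<Rightarrow> ('n \<Rightarrow> rat) \<Rightarrow> rat" where
  "bilQ G x y = (\<Sum>i\<in>UNIV. \<Sum>j\<in>UNIV. x i * G i j * y j)"

definition ofv :: "('n \<Rightarrow> int) \<Rightarrow> ('n \<Rightarrow> rat)" where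
  "ofv x = (\<lambda>i. of_int (x i))"

definition bil :: "('n::finite \<Rightarrow> 'n \<Rightarrow> rat) \<Rightarrow> ('n \<Rightarrow> int) \<Rightarrow> ('n \<Rightarrow> int) \<Rightarrow> rat" where
  "bil G x y = bilQ G (ofv x) (ofv y)"

definition is_lattice :: "('n::finite \<Rightarrow> 'n \<Rightarrow> rat) \<Rightarrow> bool" where
  "is_lattice G \<longleftrightarrow> (\<forall>i j. G i j = G j i) \<and>
     (\<forall>x. (\<forall>y. bil G x y = 0) \<longrightarrow> (\<forall>i. x i = 0))"

definition idG :: "'m \<Rightarrow> 'm \<Rightarrow> rat" where
  "idG i j = (if i = j then 1 else 0)"

definition lat_emb :: "('n::finite \<Rightarrow> 'n \<Rightarrow> rat) \<Rightarrow> ('m::finite \<Rightarrow> 'm \<Rightarrow> rat)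
     \<Rightarrow> (('n \<Rightarrow> int) \<Rightarrow> ('m \<Rightarrow> int)) \<Rightarrow> bool" where
  "lat_emb G H f \<longleftrightarrow> (\<forall>x y. f (\<lambda>i. x i + y i) = (\<lambda>k. f x k + f y k)) \<and> inj f \<and>
     (\<forall>x y. bil H (f x) (f y) = bil G x y)"

definition lat_dual :: "('n::finite \<Rightarrow> 'n \<Rightarrow> rat) \<Rightarrow> ('n \<Rightarrow> rat) set" where
  "lat_dual G = {x. \<forall>y. bilQ G x (ofv y) \<in> \<int>}"

definition Char :: "('n::finite \<Rightarrow> 'n \<Rightarrow> rat) \<Rightarrow> ('n \<Rightarrow> rat) set" where
  "Char G = {\<chi> \<in> lat_dual G. \<forall>y. \<exists>k::int. bilQ G \<chi> (ofv y) - bil G y y = 2 * of_int k}"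

definition Short :: "('n::finite \<Rightarrow> 'n \<Rightarrow> rat) \<Rightarrow> ('n \<Rightarrow> rat) set" where
  "Short G = {\<chi> \<in> Char G. \<forall>y. bilQ G \<chi> \<chi> \<le> bilQ G (\<lambda>i. \<chi> i + 2 * ofv y i) (\<lambda>i. \<chi> i + 2 * ofv y i)}"

text \<open>x \<in> Lambda tensor Q is the restriction (via the embedding f : Lambda \<rightarrow> Z) of
z \<in> Z tensor Q, Z with orthonormal basis: <x, y> = <z, f y> for all y in Lambda.\<close>
definition is_restr :: "('n::finite \<Rightarrow> 'n \<Rightarrow> rat) \<Rightarrow> (('n \<Rightarrow> int) \<Rightarrow> ('m::finite \<Rightarrow> int))
     \<Rightarrow> ('m \<Rightarrow> rat) \<Rightarrow> ('n \<Rightarrow> rat) \<Rightarrow> bool" where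
  "is_restr G f z x \<longleftrightarrow> (\<forall>y. bilQ G x (ofv y) = bilQ idG z (ofv (f y)))"

definition restr_short_surj :: "('n::finite \<Rightarrow> 'n \<Rightarrow> rat) \<Rightarrow> (('n \<Rightarrow> int) \<Rightarrow> ('m::finite \<Rightarrow> int)) \<Rightarrow> bool" where
  "restr_short_surj G f \<longleftrightarrow>
     (\<forall>z \<in> Short (idG :: 'm \<Rightarrow> 'm \<Rightarrow> rat). \<exists>x \<in> Short G. is_restr G f z x) \<and>
     (\<forall>x \<in> Short G. \<exists>z \<in> Short (idG :: 'm \<Rightarrow> 'm \<Rightarrow> rat). is_restr G f z x)"

definition bvec :: "'n \<Rightarrow> ('n \<Rightarrow> int)" where
  "bvec j = (\<lambda>i. if i = j then 1 else 0)"

end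

theory Submission
  imports Defs "HOL-Library.Function_Algebras"
begin

text \<open>The short characteristic covectors of a lattice with orthonormal basis are the sign vectors,
and the largest pairing of an integer vector with a sign vector is its \<open>\<ell>\<^sub>1\<close>-norm. Hence the
surjectivity hypotheses force \<open>\<parallel>\<iota>\<^sub>1 x\<parallel>\<^sub>1 = \<parallel>\<iota>\<^sub>2 x\<parallel>\<^sub>1\<close> for all \<open>x \<in> \<Lambda>\<close>, while
\<open>\<parallel>\<iota>\<^sub>1 x\<parallel>\<^sub>2 = \<parallel>\<iota>\<^sub>2 x\<parallel>\<^sub>2\<close> holds because both maps are embeddings. Comparing the two norms on basis
vectors and their sums shows that the matrix of \<open>\<iota>\<^sub>2\<close> has entries in \<open>{-1,0,1}\<close> and rows of
constant sign. Second differences of the \<open>\<ell>\<^sub>1\<close>-norm count the rows on which a vector vanishes;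
with a suitable test vector this shows that for every set \<open>S\<close> of basis vectors of \<open>\<Lambda>\<close>, \<open>\<iota>\<^sub>1\<close> and
\<open>\<iota>\<^sub>2\<close> have equally many rows supported exactly on \<open>S\<close>. Matching these rows gives a signed
injection of orthonormal bases, i.e. an embedding \<open>Z\<^sub>1 \<hookrightarrow> Z\<^sub>2\<close> through which \<open>\<iota>\<^sub>2\<close> factors.\<close>

definition norm1 :: "('a::finite \<Rightarrow> int) \<Rightarrow> int" where
  "norm1 v = (\<Sum>i\<in>UNIV. \<bar>v i\<bar>)"

definition sqnorm :: "('a::finite \<Rightarrow> int) \<Rightarrow> int" where
  "sqnorm v = (\<Sum>i\<in>UNIV. (v i)\<^sup>2)"

subsection \<open>\<open>\<ell>\<^sub>1\<close>- and \<open>\<ell>\<^sub>2\<close>-norms of integer vectors\<close>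

lemma sum_eq_iff_pointwise_eq:
  fixes f g :: "'a \<Rightarrow> 'b::ordered_cancel_comm_monoid_add"
  assumes "finite I" and "\<And>i. i \<in> I \<Longrightarrow> f i \<le> g i"
  shows "sum f I = sum g I \<longleftrightarrow> (\<forall>i\<in>I. f i = g i)"
proof
  assume eq: "sum f I = sum g I"
  show "\<forall>i\<in>I. f i = g i"
    using sum_mono_inv[OF eq assms(2) _ assms(1)] by blast
next
  assume "\<forall>i\<in>I. f i = g i"
  then show "sum f I = sum g I"
    by (intro sum.cong) auto
qed

lemma int_abs_le_square: "\<bar>c\<bar> \<le> (c::int)\<^sup>2"
  and int_abs_eq_square_iff: "\<bar>c\<bar> = (c::int)\<^sup>2 \<longleftrightarrow> \<bar>c\<bar> \<le> 1"
proof -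
  have sq: "c\<^sup>2 = \<bar>c\<bar> * \<bar>c\<bar>"
    by (simp add: power2_eq_square abs_mult[symmetric])
  consider "\<bar>c\<bar> \<le> 1" | "\<bar>c\<bar> \<ge> 2"
    by linarith
  then have "\<bar>c\<bar> \<le> c\<^sup>2 \<and> (\<bar>c\<bar> = c\<^sup>2 \<longleftrightarrow> \<bar>c\<bar> \<le> 1)"
  proof cases
    case 1
    then have "c = -1 \<or> c = 0 \<or> c = 1"
      by linarith
    then show ?thesis
      by auto
  next
    case 2
    then have "\<bar>c\<bar> * 2 \<le> \<bar>c\<bar> * \<bar>c\<bar>"
      by (intro mult_left_mono) auto
    then show ?thesis
      unfolding sq using 2 by linarith
  qed
  then show "\<bar>c\<bar> \<le> c\<^sup>2" and "\<bar>c\<bar> = c\<^sup>2 \<longleftrightarrow> \<bar>c\<bar> \<le> 1"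
    by simp_all
qed

lemma norm1_eq_sqnorm_iff: "norm1 v = sqnorm v \<longleftrightarrow> (\<forall>i. \<bar>v i\<bar> \<le> 1)"
  unfolding norm1_def sqnorm_def
  by (simp add: sum_eq_iff_pointwise_eq int_abs_le_square int_abs_eq_square_iff)

lemma abs_add_eq_iff: "\<bar>a + b\<bar> = \<bar>a\<bar> + \<bar>b\<bar> \<longleftrightarrow> 0 \<le> (a::int) * b"
  by (cases "a \<ge> 0"; cases "b \<ge> 0") (auto simp: zero_le_mult_iff)

lemma norm1_add_eq_iff: "norm1 (u + w) = norm1 u + norm1 w \<longleftrightarrow> (\<forall>i. 0 \<le> u i * w i)"
  unfolding norm1_def sum.distrib[symmetric]
  by (simp add: sum_eq_iff_pointwise_eq abs_triangle_ineq abs_add_eq_iff)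

lemma norm1_second_difference:
  assumes "\<And>i. \<bar>w i\<bar> \<le> 1"
  shows "norm1 (u + w) + norm1 (u - w) = 2 * norm1 u + 2 * int (card {i. w i \<noteq> 0 \<and> u i = 0})"
proof -
  have "\<bar>u i + w i\<bar> + \<bar>u i - w i\<bar> = 2 * \<bar>u i\<bar> + (if w i \<noteq> 0 \<and> u i = 0 then 2 else 0)" for i
  proof -
    have "w i = -1 \<or> w i = 0 \<or> w i = 1"
      using assms[of i] by linarith
    then show ?thesis
      by auto
  qed
  moreover have "(\<Sum>i\<in>UNIV. if w i \<noteq> 0 \<and> u i = 0 then 2 else 0) = 2 * int (card {i. w i \<noteq> 0 \<and> u i = 0})"
    by (simp add: sum.If_cases)
  ultimately show ?thesis
    by (simp add: norm1_def sum.distrib[symmetric] sum_distrib_left sum.distrib)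
qed

text \<open>For \<open>j \<in> R\<close> the sum of this test vector over \<open>R\<close> is
\<open>|R \<inter> S| - |S| + |S| \<cdot> |R - S|\<close>, which vanishes only for \<open>R = S\<close>.\<close>

definition support_test :: "'n set \<Rightarrow> 'n \<Rightarrow> 'n \<Rightarrow> int" where
  "support_test S j i = (if i = j then 1 - int (card S) else if i \<in> S then 1 else int (card S))"

lemma sum_support_test_eq_0_iff:
  fixes S R :: "'n::finite set"
  assumes "j \<in> S" and "j \<in> R"
  shows "(\<Sum>i\<in>R. support_test S j i) = 0 \<longleftrightarrow> R = S"
proof -
  have "(\<Sum>i\<in>R \<inter> S. support_test S j i) = (\<Sum>i\<in>R \<inter> S. 1 - (if i = j then int (card S) else 0))"
    by (intro sum.cong) (auto simp: support_test_def)
  also have "\<dots> = int (card (R \<inter> S)) - int (card S)"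
    using assms by (simp add: sum_subtractf)
  finally have inside: "(\<Sum>i\<in>R \<inter> S. support_test S j i) = int (card (R \<inter> S)) - int (card S)" .
  have "(\<Sum>i\<in>R - S. support_test S j i) = (\<Sum>i\<in>R - S. int (card S))"
    using assms by (intro sum.cong) (auto simp: support_test_def)
  then have outside: "(\<Sum>i\<in>R - S. support_test S j i) = int (card S) * int (card (R - S))"
    by simp
  have total: "(\<Sum>i\<in>R. support_test S j i)
      = int (card (R \<inter> S)) - int (card S) + int (card S) * int (card (R - S))"
    by (simp add: sum.Int_Diff[of R _ S] inside outside)
  show ?thesis
  proof (cases "R \<subseteq> S")
    case True
    then have "(\<Sum>i\<in>R. support_test S j i) = int (card R) - int (card S)"
      using total by (simp add: Int_absorb2)
    then show ?thesis
      using card_subset_eq[OF finite True] by auto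
  next
    case False
    then have "card (R - S) \<ge> 1" and "card (R \<inter> S) \<ge> 1"
      using assms by (auto simp: Suc_le_eq card_gt_0_iff)
    then have "int (card S) \<le> int (card S) * int (card (R - S))"
      by (simp add: mult_le_cancel_left1)
    with total \<open>card (R \<inter> S) \<ge> 1\<close> False show ?thesis
      by auto
  qed
qed

lemma additive_scale:
  fixes f :: "('n \<Rightarrow> int) \<Rightarrow> ('m \<Rightarrow> int)"
  assumes "additive f"
  shows "f (\<lambda>i. c * v i) = (\<lambda>k. c * f v k)"
proof (induction c rule: int_induct[where k = 0])
  case base
  show ?case using additive.zero[OF assms] by (simp add: zero_fun_def)
next
  case (step1 c)
  have "f (\<lambda>i. (c + 1) * v i) = f ((\<lambda>i. c * v i) + v)"
    by (simp add: plus_fun_def algebra_simps)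
  also have "\<dots> = f (\<lambda>i. c * v i) + f v"
    by (rule additive.add[OF assms])
  finally show ?case
    using step1 by (simp add: fun_eq_iff algebra_simps)
next
  case (step2 c)
  have "f (\<lambda>i. (c - 1) * v i) = f ((\<lambda>i. c * v i) - v)"
    by (simp add: fun_diff_def algebra_simps)
  also have "\<dots> = f (\<lambda>i. c * v i) - f v"
    by (rule additive.diff[OF assms])
  finally show ?case
    using step2 by (simp add: fun_eq_iff algebra_simps)
qed

lemma additive_expansion:
  fixes f :: "('n::finite \<Rightarrow> int) \<Rightarrow> ('m \<Rightarrow> int)"
  assumes "additive f"
  shows "f x k = (\<Sum>j\<in>UNIV. x j * f (bvec j) k)"
proof -
  have sum_apply: "(sum g A) i = (\<Sum>a\<in>A. g a i)" for g :: "'n \<Rightarrow> 'b \<Rightarrow> int" and A i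
    by (induction A rule: infinite_finite_induct) simp_all
  have "x = (\<Sum>j\<in>UNIV. (\<lambda>i. x j * bvec j i))"
    by (simp add: fun_eq_iff sum_apply bvec_def if_distrib cong: if_cong)
  then have "f x = (\<Sum>j\<in>UNIV. f (\<lambda>i. x j * bvec j i))"
    by (metis additive.sum[OF assms])
  then show ?thesis by (simp add: sum_apply additive_scale[OF assms])
qed

lemma bilQ_idG: "bilQ idG x y = (\<Sum>i\<in>UNIV. x i * y i)"
proof -
  have "(\<Sum>j\<in>UNIV. x i * idG i j * y j) = x i * y i" for i
  proof -
    have "(\<Sum>j\<in>UNIV. x i * idG i j * y j) = (\<Sum>j\<in>UNIV. if i = j then x i * y j else 0)"
      by (rule sum.cong) (auto simp: idG_def)
    then show ?thesis by simp
  qed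
  then show ?thesis by (simp add: bilQ_def)
qed

lemma bil_idG: "bil idG x y = of_int (\<Sum>i\<in>UNIV. x i * y i)"
  by (simp add: bil_def bilQ_idG ofv_def)

lemma bil_idG_self: "bil idG v v = of_int (sqnorm v)"
  by (simp add: bil_idG sqnorm_def power2_eq_square)

lemma lat_emb_additive: "lat_emb G H f \<Longrightarrow> additive f"
  unfolding lat_emb_def additive_def plus_fun_def by blast

lemma lat_emb_sqnorm_eq:
  assumes "lat_emb G idG f1" and "lat_emb G idG f2"
  shows "sqnorm (f1 x) = sqnorm (f2 x)"
proof -
  have "bil idG (f1 x) (f1 x) = bil idG (f2 x) (f2 x)"
    using assms unfolding lat_emb_def by simp
  then show ?thesis by (simp add: bil_idG_self)
qed

lemma bilQ_idG_bvec: "bilQ idG \<chi> (ofv (bvec e)) = \<chi> e"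
proof -
  have "\<chi> i * ofv (bvec e) i = (if i = e then \<chi> e else 0)" for i
    by (simp add: ofv_def bvec_def)
  then show ?thesis by (simp add: bilQ_idG)
qed

lemma bil_idG_bvec: "bil idG (bvec e) (bvec e) = 1"
  by (simp add: bil_def bilQ_idG_bvec) (simp add: ofv_def bvec_def)

text \<open>The map \<open>Z\<^sub>1 \<rightarrow> Z\<^sub>2\<close> sending the basis vector \<open>a\<close> to \<open>\<epsilon> (\<sigma> a)\<close> times the basis
vector \<open>\<sigma> a\<close>.\<close>

definition signed_ext :: "('a \<Rightarrow> 'b) \<Rightarrow> ('b \<Rightarrow> int) \<Rightarrow> ('a \<Rightarrow> int) \<Rightarrow> ('b \<Rightarrow> int)" where
  "signed_ext \<sigma> \<epsilon> z b = (if b \<in> range \<sigma> then \<epsilon> b * z (inv \<sigma> b) else 0)"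

lemma signed_ext_apply: "inj \<sigma> \<Longrightarrow> signed_ext \<sigma> \<epsilon> z (\<sigma> a) = \<epsilon> (\<sigma> a) * z a"
  by (simp add: signed_ext_def)

lemma lat_emb_signed_ext:
  fixes \<sigma> :: "'a::finite \<Rightarrow> 'b::finite"
  assumes "inj \<sigma>" and sign: "\<And>b. \<epsilon> b = 1 \<or> \<epsilon> b = -1"
  shows "lat_emb idG idG (signed_ext \<sigma> \<epsilon>)"
  unfolding lat_emb_def
proof (intro conjI allI)
  show "signed_ext \<sigma> \<epsilon> (\<lambda>i. x i + y i) = (\<lambda>b. signed_ext \<sigma> \<epsilon> x b + signed_ext \<sigma> \<epsilon> y b)" for x y
    by (auto simp: signed_ext_def distrib_left)
  show "inj (signed_ext \<sigma> \<epsilon>)"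
  proof (rule injI)
    fix z w
    assume "signed_ext \<sigma> \<epsilon> z = signed_ext \<sigma> \<epsilon> w"
    then have "\<epsilon> (\<sigma> a) * z a = \<epsilon> (\<sigma> a) * w a" for a
      by (metis signed_ext_apply[OF assms(1)])
    moreover have "\<epsilon> (\<sigma> a) \<noteq> 0" for a
      using sign[of "\<sigma> a"] by auto
    ultimately show "z = w"
      by (simp add: fun_eq_iff)
  qed
  have "\<epsilon> b * u * (\<epsilon> b * v) = u * v" for b u v
  proof -
    have "\<epsilon> b * u * (\<epsilon> b * v) = (\<epsilon> b * \<epsilon> b) * (u * v)"
      by (simp add: ac_simps)
    also have "\<epsilon> b * \<epsilon> b = 1"
      using sign[of b] by auto
    finally show ?thesis
      by simp
  qed
  then have prod: "signed_ext \<sigma> \<epsilon> x b * signed_ext \<sigma> \<epsilon> y b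
      = (if b \<in> range \<sigma> then x (inv \<sigma> b) * y (inv \<sigma> b) else 0)" for x y b
    by (simp add: signed_ext_def)
  show "bil idG (signed_ext \<sigma> \<epsilon> x) (signed_ext \<sigma> \<epsilon> y) = bil idG x y" for x y
  proof -
    have "(\<Sum>b\<in>UNIV. signed_ext \<sigma> \<epsilon> x b * signed_ext \<sigma> \<epsilon> y b)
        = (\<Sum>b\<in>range \<sigma>. x (inv \<sigma> b) * y (inv \<sigma> b))"
      by (simp add: prod sum.If_cases)
    also have "\<dots> = (\<Sum>a\<in>UNIV. x a * y a)"
      using assms(1) by (simp add: sum.reindex)
    finally show ?thesis
      by (simp only: bil_idG)
  qed
qed

subsection \<open>Short characteristic covectors of an orthonormal lattice\<close>

lemma bilQ_idG_shift_bvec: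
  "bilQ idG (\<lambda>i. \<chi> i + 2 * ofv (\<lambda>i. s * bvec e i) i) (\<lambda>i. \<chi> i + 2 * ofv (\<lambda>i. s * bvec e i) i)
     = bilQ idG \<chi> \<chi> + 4 * of_int s * (\<chi> e + of_int s)"
proof -
  have "(\<chi> i + 2 * ofv (\<lambda>i. s * bvec e i) i) * (\<chi> i + 2 * ofv (\<lambda>i. s * bvec e i) i)
      = \<chi> i * \<chi> i + (if i = e then 4 * of_int s * (\<chi> e + of_int s) else 0)" for i
    by (auto simp: ofv_def bvec_def algebra_simps)
  then show ?thesis by (simp add: bilQ_idG sum.distrib)
qed

lemma Short_idG_sign:
  fixes \<chi> :: "'m::finite \<Rightarrow> rat"
  assumes "\<chi> \<in> Short idG"
  shows "\<chi> e = 1 \<or> \<chi> e = -1"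
proof -
  have min: "bilQ idG \<chi> \<chi> \<le> bilQ idG (\<lambda>i. \<chi> i + 2 * ofv y i) (\<lambda>i. \<chi> i + 2 * ofv y i)" for y
    using assms unfolding Short_def by blast
  have "0 \<le> of_int s * (\<chi> e + of_int s)" for s
    using min[of "\<lambda>i. s * bvec e i"] by (simp add: bilQ_idG_shift_bvec)
  from this[of 1] this[of "-1"] have bound: "\<bar>\<chi> e\<bar> \<le> 1"
    by simp
  obtain k :: int where "bilQ idG \<chi> (ofv (bvec e)) - bil idG (bvec e) (bvec e) = 2 * of_int k"
    using assms unfolding Short_def Char_def by blast
  then have odd: "\<chi> e = of_int (2 * k + 1)"
    by (simp add: bilQ_idG_bvec bil_idG_bvec)
  with bound have "\<bar>2 * k + 1\<bar> \<le> 1"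
    by (metis of_int_abs of_int_le_1_iff)
  then have "k = 0 \<or> k = -1"
    by linarith
  with odd show ?thesis
    by auto
qed

lemma sign_vector_in_Short_idG:
  fixes s :: "'m::finite \<Rightarrow> int"
  assumes sign: "\<And>e. s e = 1 \<or> s e = -1"
  shows "ofv s \<in> Short idG"
proof -
  have "bilQ idG (ofv s) (ofv y) \<in> \<int>" for y
    by (simp only: bil_def[symmetric] bil_idG Ints_of_int)
  then have dual: "ofv s \<in> lat_dual idG"
    by (simp add: lat_dual_def)
  have "even (y i * (s i - y i))" for y i
    using sign[of i] by auto
  then have even_sum: "even (\<Sum>i\<in>UNIV. y i * (s i - y i))" for y
    by (simp add: dvd_sum)
  have "\<exists>k::int. bil idG s y - bil idG y y = 2 * of_int k" for y
  proof -
    obtain k where k: "(\<Sum>i\<in>UNIV. y i * (s i - y i)) = 2 * k"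
      using even_sum[of y] by blast
    have "(\<Sum>i\<in>UNIV. s i * y i) - (\<Sum>i\<in>UNIV. y i * y i) = (\<Sum>i\<in>UNIV. y i * (s i - y i))"
      by (simp add: sum_subtractf[symmetric] algebra_simps)
    then have "bil idG s y - bil idG y y = of_int (2 * k)"
      unfolding bil_idG k by (metis of_int_diff)
    then show ?thesis by auto
  qed
  with dual have char: "ofv s \<in> Char idG"
    by (simp add: Char_def bil_def)
  have "(s i)\<^sup>2 \<le> (s i + 2 * y i)\<^sup>2" for y i
  proof -
    consider "y i \<ge> 1" | "y i = 0" | "y i \<le> -1"
      by linarith
    then have "0 \<le> y i * (y i + s i)"
      using sign[of i] by cases (auto simp: zero_le_mult_iff)
    then show ?thesis by (simp add: power2_eq_square algebra_simps)
  qed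
  then have "sqnorm s \<le> sqnorm (\<lambda>i. s i + 2 * y i)" for y
    by (simp add: sqnorm_def sum_mono)
  moreover have "(\<lambda>i. ofv s i + 2 * ofv y i) = ofv (\<lambda>i. s i + 2 * y i)" for y
    by (simp add: ofv_def fun_eq_iff)
  ultimately show ?thesis
    using char by (simp add: Short_def bil_def[symmetric] bil_idG_self)
qed

lemma norm1_le_of_restr_short_surj:
  fixes f1 :: "('n::finite \<Rightarrow> int) \<Rightarrow> ('m1::finite \<Rightarrow> int)"
    and f2 :: "('n \<Rightarrow> int) \<Rightarrow> ('m2::finite \<Rightarrow> int)"
  assumes "restr_short_surj G f1" and "restr_short_surj G f2"
  shows "norm1 (f1 x) \<le> norm1 (f2 x)"
proof -
  define s :: "'m1 \<Rightarrow> int" where "s e = (if f1 x e \<ge> 0 then 1 else -1)" for e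
  have "ofv s \<in> Short idG"
    by (rule sign_vector_in_Short_idG) (simp add: s_def)
  then obtain \<xi> where "\<xi> \<in> Short G" and \<xi>: "is_restr G f1 (ofv s) \<xi>"
    using assms(1) unfolding restr_short_surj_def by blast
  then obtain \<chi> :: "'m2 \<Rightarrow> rat" where \<chi>: "\<chi> \<in> Short idG" "is_restr G f2 \<chi> \<xi>"
    using assms(2) unfolding restr_short_surj_def by blast
  have "s e * f1 x e = \<bar>f1 x e\<bar>" for e
    by (simp add: s_def)
  then have "of_int (norm1 (f1 x)) = bil idG s (f1 x)"
    by (simp add: norm1_def bil_idG)
  also have "\<dots> = bilQ G \<xi> (ofv x)"
    using \<xi> by (simp add: is_restr_def bil_def)
  also have "\<dots> = bilQ idG \<chi> (ofv (f2 x))"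
    using \<chi>(2) by (simp add: is_restr_def)
  also have "\<dots> \<le> of_int (norm1 (f2 x))"
    unfolding bilQ_idG norm1_def of_int_sum ofv_def
  proof (rule sum_mono)
    fix e
    show "\<chi> e * of_int (f2 x e) \<le> of_int \<bar>f2 x e\<bar>"
      using Short_idG_sign[OF \<chi>(1), of e] by auto
  qed
  finally show ?thesis
    by simp
qed

lemma norm1_eq_of_restr_short_surj:
  assumes "restr_short_surj G f1" and "restr_short_surj G f2"
  shows "norm1 (f1 x) = norm1 (f2 x)"
  using norm1_le_of_restr_short_surj[OF assms] norm1_le_of_restr_short_surj[OF assms(2,1)]
  by (simp add: order_antisym)

subsection \<open>Maps with equal \<open>\<ell>\<^sub>1\<close>- and \<open>\<ell>\<^sub>2\<close>-norms\<close>

lemma fibre_preserving_injection: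
  fixes p :: "'a::finite \<Rightarrow> 'c" and q :: "'b::finite \<Rightarrow> 'c"
  assumes "\<And>a. p a \<in> Y"
    and "\<And>y. y \<in> Y \<Longrightarrow> card (p -` {y}) = card (q -` {y})"
  obtains \<sigma> where "inj \<sigma>" and "\<And>a. q (\<sigma> a) = p a" and "\<And>b. q b \<in> Y \<Longrightarrow> b \<in> range \<sigma>"
proof -
  have "\<forall>y. \<exists>h. y \<in> Y \<longrightarrow> bij_betw h (p -` {y}) (q -` {y})"
    using assms(2) finite_same_card_bij[OF finite finite] by metis
  then obtain h where h: "\<And>y. y \<in> Y \<Longrightarrow> bij_betw (h y) (p -` {y}) (q -` {y})"
    by metis
  define \<sigma> where "\<sigma> a = h (p a) a" for a
  have fibre: "q (\<sigma> a) = p a" for a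
    using bij_betw_apply[OF h[OF assms(1)], of a] by (simp add: \<sigma>_def)
  have "inj \<sigma>"
  proof (rule injI)
    fix a b
    assume "\<sigma> a = \<sigma> b"
    moreover from this have "p a = p b"
      by (metis fibre)
    ultimately show "a = b"
      using bij_betw_imp_inj_on[OF h[OF assms(1)], of a] by (simp add: \<sigma>_def inj_on_def)
  qed
  moreover have "b \<in> range \<sigma>" if qb: "q b \<in> Y" for b
  proof -
    obtain a where "p a = q b" and "b = h (q b) a"
      using bij_betw_imp_surj_on[OF h[OF qb]] by (metis imageE vimage_singleton_eq)
    then show ?thesis
      by (metis \<sigma>_def rangeI)
  qed
  ultimately show ?thesis
    using that fibre by blast
qed

locale norm_matched_pair =
  fixes f1 :: "('n::finite \<Rightarrow> int) \<Rightarrow> ('m1::finite \<Rightarrow> int)"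
    and f2 :: "('n \<Rightarrow> int) \<Rightarrow> ('m2::finite \<Rightarrow> int)"
  assumes additive1: "additive f1"
    and additive2: "additive f2"
    and norm1_eq: "norm1 (f1 x) = norm1 (f2 x)"
    and sqnorm_eq: "sqnorm (f1 x) = sqnorm (f2 x)"
    and entries1: "f1 (bvec j) e \<in> {0, 1}"
    and row_nonzero1: "\<exists>j. f1 (bvec j) e \<noteq> 0"
begin

definition supp1 :: "'m1 \<Rightarrow> 'n set" where
  "supp1 e = {j. f1 (bvec j) e \<noteq> 0}"

definition supp2 :: "'m2 \<Rightarrow> 'n set" where
  "supp2 f = {j. f2 (bvec j) f \<noteq> 0}"

definition sign2 :: "'m2 \<Rightarrow> int" where
  "sign2 f = (if \<exists>j. f2 (bvec j) f > 0 then 1 else -1)"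

lemma sign2_cases: "sign2 f = 1 \<or> sign2 f = -1"
  by (simp add: sign2_def)

lemma supp1_nonempty: "supp1 e \<noteq> {}"
  using row_nonzero1 by (simp add: supp1_def)

lemma f1_bvec: "f1 (bvec j) e = (if j \<in> supp1 e then 1 else 0)"
  using entries1[of j e] by (auto simp: supp1_def)

lemma f2_bvec_abs_le: "\<bar>f2 (bvec j) f\<bar> \<le> 1"
proof -
  have "norm1 (f1 (bvec j)) = sqnorm (f1 (bvec j))"
    by (simp add: norm1_eq_sqnorm_iff f1_bvec)
  then have "norm1 (f2 (bvec j)) = sqnorm (f2 (bvec j))"
    by (simp add: norm1_eq sqnorm_eq)
  then show ?thesis
    by (simp add: norm1_eq_sqnorm_iff)
qed

lemma f2_bvec_same_sign: "0 \<le> f2 (bvec j) f * f2 (bvec k) f"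
proof -
  have "norm1 (f1 (bvec j) + f1 (bvec k)) = norm1 (f1 (bvec j)) + norm1 (f1 (bvec k))"
    by (simp add: norm1_add_eq_iff f1_bvec)
  moreover have "f1 (bvec j) + f1 (bvec k) = f1 (bvec j + bvec k)"
    and "f2 (bvec j) + f2 (bvec k) = f2 (bvec j + bvec k)"
    by (simp_all add: additive.add[OF additive1] additive.add[OF additive2])
  ultimately have "norm1 (f2 (bvec j) + f2 (bvec k)) = norm1 (f2 (bvec j)) + norm1 (f2 (bvec k))"
    by (simp add: norm1_eq)
  then show ?thesis
    by (simp add: norm1_add_eq_iff)
qed

lemma f2_bvec: "f2 (bvec j) f = (if j \<in> supp2 f then sign2 f else 0)"
proof (cases "f2 (bvec j) f = 0")
  case False
  then have "f2 (bvec j) f = 1 \<or> f2 (bvec j) f = -1"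
    using f2_bvec_abs_le[of j f] by linarith
  then show ?thesis
  proof
    assume pos: "f2 (bvec j) f = 1"
    then have "sign2 f = 1"
      unfolding sign2_def by (metis zero_less_one)
    with pos show ?thesis
      by (simp add: supp2_def)
  next
    assume neg: "f2 (bvec j) f = -1"
    have "\<not> f2 (bvec k) f > 0" for k
      using f2_bvec_same_sign[of j f k] neg by auto
    with neg show ?thesis
      by (auto simp: supp2_def sign2_def)
  qed
qed (simp add: supp2_def)

lemma f1_apply: "f1 x e = (\<Sum>j\<in>supp1 e. x j)"
proof -
  have "f1 x e = (\<Sum>j\<in>UNIV. x j * f1 (bvec j) e)"
    by (rule additive_expansion[OF additive1])
  also have "\<dots> = (\<Sum>j\<in>UNIV. if j \<in> supp1 e then x j else 0)"
    by (intro sum.cong) (simp_all add: f1_bvec)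
  finally show ?thesis
    by (simp add: sum.If_cases)
qed

lemma f2_apply: "f2 x f = sign2 f * (\<Sum>j\<in>supp2 f. x j)"
proof -
  have "f2 x f = (\<Sum>j\<in>UNIV. x j * f2 (bvec j) f)"
    by (rule additive_expansion[OF additive2])
  also have "\<dots> = (\<Sum>j\<in>UNIV. if j \<in> supp2 f then sign2 f * x j else 0)"
    by (intro sum.cong) (simp_all add: f2_bvec)
  finally show ?thesis
    by (simp add: sum.If_cases sum_distrib_left)
qed

lemma card_vanishing_rows_eq:
  "card {e. j \<in> supp1 e \<and> f1 t e = 0} = card {f. j \<in> supp2 f \<and> f2 t f = 0}"
proof -
  have second_diff1: "norm1 (f1 t + f1 (bvec j)) + norm1 (f1 t - f1 (bvec j))
      = 2 * norm1 (f1 t) + 2 * int (card {e. f1 (bvec j) e \<noteq> 0 \<and> f1 t e = 0})"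
    by (rule norm1_second_difference) (simp add: f1_bvec)
  have second_diff2: "norm1 (f2 t + f2 (bvec j)) + norm1 (f2 t - f2 (bvec j))
      = 2 * norm1 (f2 t) + 2 * int (card {f. f2 (bvec j) f \<noteq> 0 \<and> f2 t f = 0})"
    by (rule norm1_second_difference) (rule f2_bvec_abs_le)
  have "norm1 (f1 t + f1 (bvec j)) = norm1 (f2 t + f2 (bvec j))"
    using norm1_eq[of "t + bvec j"] by (simp only: additive.add[OF additive1] additive.add[OF additive2])
  moreover have "norm1 (f1 t - f1 (bvec j)) = norm1 (f2 t - f2 (bvec j))"
    using norm1_eq[of "t - bvec j"] by (simp only: additive.diff[OF additive1] additive.diff[OF additive2])
  ultimately have "int (card {e. f1 (bvec j) e \<noteq> 0 \<and> f1 t e = 0})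
      = int (card {f. f2 (bvec j) f \<noteq> 0 \<and> f2 t f = 0})"
    using second_diff1 second_diff2 norm1_eq[of t] by linarith
  then show ?thesis
    by (simp add: supp1_def supp2_def)
qed

lemma card_supp_eq:
  assumes "S \<noteq> {}"
  shows "card (supp1 -` {S}) = card (supp2 -` {S})"
proof -
  obtain j where j: "j \<in> S"
    using assms by blast
  define t where "t = support_test S j"
  have "f1 t e = 0 \<longleftrightarrow> supp1 e = S" if "j \<in> supp1 e" for e
    using sum_support_test_eq_0_iff[OF j that] by (simp add: f1_apply t_def)
  then have "{e. j \<in> supp1 e \<and> f1 t e = 0} = supp1 -` {S}"
    using j by blast
  moreover have "f2 t f = 0 \<longleftrightarrow> supp2 f = S" if "j \<in> supp2 f" for f
  proof -
    have "sign2 f \<noteq> 0"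
      using sign2_cases[of f] by auto
    then show ?thesis
      using sum_support_test_eq_0_iff[OF j that] by (simp add: f2_apply t_def)
  qed
  then have "{f. j \<in> supp2 f \<and> f2 t f = 0} = supp2 -` {S}"
    using j by blast
  ultimately show ?thesis
    using card_vanishing_rows_eq[of j t] by simp
qed

lemma factors_through_lat_emb: "\<exists>\<iota>. lat_emb idG idG \<iota> \<and> f2 = \<iota> \<circ> f1"
proof -
  obtain \<sigma> where "inj \<sigma>" and supp_\<sigma>: "\<And>e. supp2 (\<sigma> e) = supp1 e"
    and onto: "\<And>f. supp2 f \<in> {S. S \<noteq> {}} \<Longrightarrow> f \<in> range \<sigma>"
  proof (rule fibre_preserving_injection[of supp1 "{S. S \<noteq> {}}" supp2])
    show "supp1 e \<in> {S. S \<noteq> {}}" for e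
      using supp1_nonempty by simp
    show "card (supp1 -` {S}) = card (supp2 -` {S})" if "S \<in> {S. S \<noteq> {}}" for S
      using card_supp_eq that by simp
  qed (rule that)
  have factor: "f2 x f = signed_ext \<sigma> sign2 (f1 x) f" for x f
  proof (cases "f \<in> range \<sigma>")
    case True
    then obtain e where "f = \<sigma> e"
      by blast
    then show ?thesis
      by (simp add: f1_apply f2_apply supp_\<sigma> signed_ext_apply[OF \<open>inj \<sigma>\<close>])
  next
    case False
    then have "supp2 f = {}"
      using onto by blast
    with False show ?thesis
      by (simp add: f2_apply signed_ext_def)
  qed
  show ?thesis
  proof (intro exI conjI)
    show "lat_emb idG idG (signed_ext \<sigma> sign2)"
      using \<open>inj \<sigma>\<close> sign2_cases by (rule lat_emb_signed_ext)
    show "f2 = signed_ext \<sigma> sign2 \<circ> f1"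
      by (intro ext) (simp add: factor)
  qed
qed

end

theorem proposition2p8:
  fixes G :: "'n::finite \<Rightarrow> 'n \<Rightarrow> rat"
    and \<iota>1 :: "('n \<Rightarrow> int) \<Rightarrow> ('m1::finite \<Rightarrow> int)"
    and \<iota>2 :: "('n \<Rightarrow> int) \<Rightarrow> ('m2::finite \<Rightarrow> int)"
  assumes "is_lattice G"
    and "lat_emb G idG \<iota>1"
    and "lat_emb G idG \<iota>2"
    and "\<forall>j e. \<iota>1 (bvec j) e \<in> {0, 1}"
    and "\<forall>e. \<exists>j. \<iota>1 (bvec j) e \<noteq> 0"
    and "restr_short_surj G \<iota>1"
    and "restr_short_surj G \<iota>2"
  shows "\<exists>\<iota> :: ('m1 \<Rightarrow> int) \<Rightarrow> ('m2 \<Rightarrow> int). lat_emb idG idG \<iota> \<and> \<iota>2 = \<iota> \<circ> \<iota>1"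
proof -
  interpret norm_matched_pair \<iota>1 \<iota>2
  proof (rule norm_matched_pair.intro)
    show "additive \<iota>1"
      using assms(2) by (rule lat_emb_additive)
    show "additive \<iota>2"
      using assms(3) by (rule lat_emb_additive)
    show "norm1 (\<iota>1 x) = norm1 (\<iota>2 x)" for x
      using assms(6,7) by (rule norm1_eq_of_restr_short_surj)
    show "sqnorm (\<iota>1 x) = sqnorm (\<iota>2 x)" for x
      using assms(2,3) by (rule lat_emb_sqnorm_eq)
  qed (use assms(4,5) in blast)+
  show ?thesis
    by (rule factors_through_lat_emb)
qed

end
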